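(* Let $(b,c)$ be a locally finite, connected graph over a countable set $X$ on which $\mathbb{Z}^d$ acts freely and cocompactly such that $H_{b,c}$ is $\mathbb{Z}^d$-invariant, and fix $x_0\in X$. Then $\rho:\mathcal{M}_{(-\infty,\lambda_0]}\to\mathbb{R}^d$ is a homeomorphism (with the topology of pointwise convergence on $\mathcal{M}_{(-\infty,\lambda_0]}$). Moreover, for every $\lambda\in\mathbb{R}$ the sets $\mathcal{M}_{[\lambda,\lambda_0]}$ and $\mathcal{A}_{[\lambda,\lambda_0]}=\rho(\mathcal{M}_{[\lambda,\lambda_0]})$ are compact.
   Context: A graph over $X$ is $(b,c)$ with $b:X\times X\to[0,\infty)$, $c:X\to\mathbb{R}$, $\sum_yb(x,y)<\infty$ ($b$ need not be symmetric); locally finite and connected as usual ($x\sim y$ iff $b(x,y)>0$). $H_{b,c}f(x)=\sum_yb(x,y)(f(x)-f(y))+c(x)f(x)$ on $\mathrm{Dom}(H)=\{f:\sum_yb(x,y)|f(y)|<\infty\ \forall x\}$; $f$ is $\lambda$-harmonic if $(H-\lambda)f=0$. $T_gf(x)=f(g^{-1}x)$; $H$ is $\mathbb{Z}^d$-invariant if $T_g$ preserves $\mathrm{Dom}(H)$ and $HT_g=T_gH$. $f$ is multiplicative with character $\gamma_f$ if $\gamma_f:\mathbb{Z}^d\to(0,\infty)$ is a homomorphism with $f(zx)=\gamma_f(z)f(x)$. $\mathcal{K}_\lambda$ is the pointwise closure of $\{f\ge0,\ f\not\equiv0,\ \lambda\text{-harmonic},\ f(x_0)=1\}$, $\mathcal{M}_\lambda$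 its multiplicative elements, $\mathcal{M}_I=\bigcup_{\lambda\in I}\mathcal{M}_\lambda$. $\rho(f)=\alpha\in\mathbb{R}^d$ where $\log\gamma_f(z)=\langle\alpha,z\rangle$ for all $z\in\mathbb{Z}^d$. $\lambda_0=\sup\{\lambda:\mathcal{M}_\lambda\neq\emptyset\}$ (finite, and $\mathcal{M}_\lambda=\emptyset$ for $\lambda>\lambda_0$). *)

theory Defs
  imports "HOL-Analysis.Analysis"
begin

definition Dom :: "('x \<Rightarrow> 'x \<Rightarrow> real) \<Rightarrow> ('x \<Rightarrow> real) set" where
  "Dom b = {f. \<forall>x. (\<lambda>y. b x y * \<bar>f y\<bar>) summable_on UNIV}"

definition Hop :: "('x \<Rightarrow> 'x \<Rightarrow> real) \<Rightarrow> ('x \<Rightarrow> real) \<Rightarrow> ('x \<Rightarrow> real) \<Rightarrow> 'x \<Rightarrow> real" where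
  "Hop b c f x = (\<Sum>\<^sub>\<infinity>y. b x y * (f x - f y)) + c x * f x"

definition Tact :: "(int^'d \<Rightarrow> 'x \<Rightarrow> 'x) \<Rightarrow> int^'d \<Rightarrow> ('x \<Rightarrow> real) \<Rightarrow> 'x \<Rightarrow> real" where
  "Tact act g f = (\<lambda>x. f (act (- g) x))"

definition Hinvariant :: "('x \<Rightarrow> 'x \<Rightarrow> real) \<Rightarrow> ('x \<Rightarrow> real) \<Rightarrow> (int^'d \<Rightarrow> 'x \<Rightarrow> 'x) \<Rightarrow> bool" where
  "Hinvariant b c act \<longleftrightarrow> (\<forall>g f. f \<in> Dom b \<longrightarrow>
      Tact act g f \<in> Dom b \<and> Hop b c (Tact act g f) = Tact act g (Hop b c f))"

definition harmonic :: "('x \<Rightarrow> 'x \<Rightarrow> real) \<Rightarrow> ('x \<Rightarrow> real) \<Rightarrow> real \<Rightarrow> ('x \<Rightarrow> real) \<Rightarrow> bool" where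
  "harmonic b c l f \<longleftrightarrow> f \<in> Dom b \<and> (\<forall>x. Hop b c f x - l * f x = 0)"

text \<open>Pointwise closure = closure in the product topology on 'x \<Rightarrow> real.\<close>
definition Kset :: "('x \<Rightarrow> 'x \<Rightarrow> real) \<Rightarrow> ('x \<Rightarrow> real) \<Rightarrow> 'x \<Rightarrow> real \<Rightarrow> ('x \<Rightarrow> real) set" where
  "Kset b c x0 l = closure {f. (\<forall>x. 0 \<le> f x) \<and> f \<noteq> (\<lambda>_. 0) \<and> harmonic b c l f \<and> f x0 = 1}"

definition is_character :: "(int^'d \<Rightarrow> real) \<Rightarrow> bool" where
  "is_character \<gamma> \<longleftrightarrow> (\<forall>z. 0 < \<gamma> z) \<and> (\<forall>z w. \<gamma> (z + w) = \<gamma> z * \<gamma> w)"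

definition multiplicative :: "(int^'d \<Rightarrow> 'x \<Rightarrow> 'x) \<Rightarrow> ('x \<Rightarrow> real) \<Rightarrow> (int^'d \<Rightarrow> real) \<Rightarrow> bool" where
  "multiplicative act f \<gamma> \<longleftrightarrow> is_character \<gamma> \<and> (\<forall>z x. f (act z x) = \<gamma> z * f x)"

definition Mset :: "('x \<Rightarrow> 'x \<Rightarrow> real) \<Rightarrow> ('x \<Rightarrow> real) \<Rightarrow> (int^'d \<Rightarrow> 'x \<Rightarrow> 'x) \<Rightarrow> 'x \<Rightarrow> real \<Rightarrow> ('x \<Rightarrow> real) set" where
  "Mset b c act x0 l = {f \<in> Kset b c x0 l. \<exists>\<gamma>. multiplicative act f \<gamma>}"

definition MI :: "('x \<Rightarrow> 'x \<Rightarrow> real) \<Rightarrow> ('x \<Rightarrow> real) \<Rightarrow> (int^'d \<Rightarrow> 'x \<Rightarrow> 'x) \<Rightarrow> 'x \<Rightarrow> real set \<Rightarrow> ('x \<Rightarrow> real) set" where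
  "MI b c act x0 I = (\<Union>l\<in>I. Mset b c act x0 l)"

definition rho :: "(int^'d \<Rightarrow> 'x \<Rightarrow> 'x) \<Rightarrow> ('x \<Rightarrow> real) \<Rightarrow> real^'d" where
  "rho act f = (THE \<alpha>. \<exists>\<gamma>. multiplicative act f \<gamma> \<and>
      (\<forall>z. ln (\<gamma> z) = (\<Sum>i\<in>UNIV. \<alpha> $ i * real_of_int (z $ i))))"

definition lambda0 :: "('x \<Rightarrow> 'x \<Rightarrow> real) \<Rightarrow> ('x \<Rightarrow> real) \<Rightarrow> (int^'d \<Rightarrow> 'x \<Rightarrow> 'x) \<Rightarrow> 'x \<Rightarrow> real" where
  "lambda0 b c act x0 = Sup {l. Mset b c act x0 l \<noteq> {}}"

end

theory Submission
  imports Defs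
begin

text \<open>
  Nonnegative \<open>\<lambda>\<close>-supersolutions normalised at \<open>x\<^sub>0\<close> are bounded pointwise by a
  Harnack inequality along paths from \<open>x\<^sub>0\<close>, so sets of them with \<open>\<lambda>\<close> bounded below are
  compact in the product topology. A multiplicative function \<open>f\<close> is \<open>\<alpha>\<close>-equivariant,
  \<open>f (z x) = exp \<langle>\<alpha>, z\<rangle> f x\<close>, with \<open>\<alpha> = \<rho> f\<close>.
  Two positive harmonic functions with the same \<open>\<alpha>\<close> coincide: their quotient is
  \<open>\<int>\<^sup>d\<close>-invariant, hence attains its minimum \<open>t\<close> by cocompactness, and the minimum principle
  applied to \<open>f - t g\<close> gives \<open>f = t g\<close>. For existence, maximise \<open>\<lambda>\<close> over the compact set of
  normalised \<open>\<alpha>\<close>-equivariant \<open>\<lambda>\<close>-supersolutions; if the maximiser were not a solution, a high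
  power of the positive operator \<open>M - H\<close> applied to it would be a strict supersolution,
  allowing a larger \<open>\<lambda>\<close>. Hence \<open>\<rho>\<close> is a continuous bijection onto \<open>\<real>\<^sup>d\<close>. Its inverse is
  continuous because \<open>\<lambda>\<close> is bounded below in terms of \<open>|\<rho> f|\<close>, so that preimages of closed
  balls are compact.
\<close>

section \<open>Characters of \<open>\<int>\<^sup>d\<close>\<close>

definition pairing :: "real^'d \<Rightarrow> int^'d \<Rightarrow> real" where
  "pairing a z = (\<Sum>i\<in>UNIV. a $ i * real_of_int (z $ i))"

lemma pairing_add: "pairing a (z + w) = pairing a z + pairing a w"
  by (simp add: pairing_def sum.distrib algebra_simps)

lemma pairing_axis: "pairing a (axis i 1) = a $ i"
  by (simp add: pairing_def axis_def if_distrib cong: if_cong)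

lemma pairing_inject: "(\<And>z. pairing a z = pairing a' z) \<Longrightarrow> a = a'"
  by (metis pairing_axis vec_eq_iff)

lemma pairing_le_norm:
  assumes "norm a \<le> R"
  shows "pairing a z \<le> R * (\<Sum>i\<in>UNIV. \<bar>real_of_int (z $ i)\<bar>)"
proof -
  have "pairing a z \<le> (\<Sum>i\<in>UNIV. \<bar>a $ i\<bar> * \<bar>real_of_int (z $ i)\<bar>)"
    unfolding pairing_def by (intro sum_mono) (metis abs_ge_self abs_mult)
  also have "\<dots> \<le> (\<Sum>i\<in>UNIV. R * \<bar>real_of_int (z $ i)\<bar>)"
    using assms component_le_norm_cart[of a] by (intro sum_mono mult_right_mono) (auto intro: order_trans)
  finally show ?thesis by (simp add: sum_distrib_left)
qed

lemma additive_eq_pairing: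
  fixes g :: "int^'d \<Rightarrow> real"
  assumes "Modules.additive g"
  shows "g z = pairing (\<chi> i. g (axis i 1)) z"
proof -
  have axis_mult: "g (axis i k) = of_int k * g (axis i 1)" for i k
  proof (induction k rule: int_induct[where k = 0])
    case base
    have "axis i (0::int) = 0" by (simp add: axis_def vec_eq_iff)
    then show ?case by (metis additive.zero[OF assms] mult_zero_left of_int_0)
  next
    case (step1 k)
    have "axis i (k + 1) = axis i k + axis i 1" by (simp add: axis_def vec_eq_iff)
    then have "g (axis i (k + 1)) = g (axis i k) + g (axis i 1)" by (simp only: additive.add[OF assms])
    with step1 show ?case by (simp add: algebra_simps)
  next
    case (step2 k)
    have "axis i (k - 1) = axis i k - axis i 1" by (simp add: axis_def vec_eq_iff)
    then have "g (axis i (k - 1)) = g (axis i k) - g (axis i 1)" by (simp only: additive.diff[OF assms])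
    with step2 show ?case by (simp add: algebra_simps)
  qed
  have "z = (\<Sum>i\<in>UNIV. axis i (z $ i))" by (simp add: vec_eq_iff axis_def)
  then have "g z = (\<Sum>i\<in>UNIV. g (axis i (z $ i)))" by (metis additive.sum[OF assms])
  also have "\<dots> = (\<Sum>i\<in>UNIV. of_int (z $ i) * g (axis i 1))" by (intro sum.cong refl axis_mult)
  also have "\<dots> = pairing (\<chi> i. g (axis i 1)) z" by (simp add: pairing_def mult.commute)
  finally show ?thesis .
qed

lemma character_eq_exp_pairing:
  assumes "is_character \<gamma>"
  shows "\<gamma> z = exp (pairing (\<chi> i. ln (\<gamma> (axis i 1))) z)"
proof -
  have pos: "\<And>z. 0 < \<gamma> z" and mult: "\<And>z w. \<gamma> (z + w) = \<gamma> z * \<gamma> w"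
    using assms by (auto simp: is_character_def)
  have "Modules.additive (\<lambda>z. ln (\<gamma> z))"
    by unfold_locales (simp add: mult ln_mult_pos pos)
  then have "ln (\<gamma> z) = pairing (\<chi> i. ln (\<gamma> (axis i 1))) z" by (rule additive_eq_pairing)
  then have "exp (ln (\<gamma> z)) = exp (pairing (\<chi> i. ln (\<gamma> (axis i 1))) z)" by simp
  then show ?thesis using pos[of z] by simp
qed

definition equivariant :: "(int^'d \<Rightarrow> 'x \<Rightarrow> 'x) \<Rightarrow> real^'d \<Rightarrow> ('x \<Rightarrow> real) \<Rightarrow> bool" where
  "equivariant act a f \<longleftrightarrow> (\<forall>z x. f (act z x) = exp (pairing a z) * f x)"

lemma equivariant_imp_multiplicative:
  "equivariant act a f \<Longrightarrow> multiplicative act f (\<lambda>z. exp (pairing a z))"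
  by (simp add: multiplicative_def is_character_def equivariant_def pairing_add exp_add)

lemma multiplicative_imp_equivariant:
  assumes "multiplicative act f \<gamma>"
  shows "equivariant act (\<chi> i. ln (\<gamma> (axis i 1))) f"
  unfolding equivariant_def
proof (intro allI)
  fix z x
  have "is_character \<gamma>" "f (act z x) = \<gamma> z * f x"
    using assms by (auto simp: multiplicative_def)
  moreover from this(1) have "\<gamma> z = exp (pairing (\<chi> i. ln (\<gamma> (axis i 1))) z)"
    by (rule character_eq_exp_pairing)
  ultimately show "f (act z x) = exp (pairing (\<chi> i. ln (\<gamma> (axis i 1))) z) * f x" by (simp only:)
qed

lemma rho_eqI:
  assumes f: "equivariant act a f" and nz: "f x0 \<noteq> 0"
  shows "rho act f = a"
  unfolding rho_def
proof (rule the_equality)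
  show "\<exists>\<gamma>. multiplicative act f \<gamma> \<and> (\<forall>z. ln (\<gamma> z) = (\<Sum>i\<in>UNIV. a $ i * real_of_int (z $ i)))"
    using equivariant_imp_multiplicative[OF f] unfolding pairing_def by auto
next
  fix a' assume "\<exists>\<gamma>. multiplicative act f \<gamma> \<and> (\<forall>z. ln (\<gamma> z) = (\<Sum>i\<in>UNIV. a' $ i * real_of_int (z $ i)))"
  then obtain \<gamma> where \<gamma>: "multiplicative act f \<gamma>" "\<And>z. ln (\<gamma> z) = pairing a' z"
    by (auto simp: pairing_def)
  have "\<gamma> z * f x0 = exp (pairing a z) * f x0" for z
    using \<gamma>(1) f unfolding multiplicative_def equivariant_def by (metis (no_types))
  then have "\<gamma> z = exp (pairing a z)" for z using nz by simp
  then show "a' = a" using \<gamma>(2) by (intro pairing_inject) simp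
qed

lemma equivariant_scale: "equivariant act a f \<Longrightarrow> equivariant act a (\<lambda>x. k * f x)"
  by (simp add: equivariant_def)

section \<open>Product topology and proper maps\<close>

lemma compact_pointwise_box: "compact {f :: 'a \<Rightarrow> real. \<forall>x. f x \<in> {A x..B x}}"
proof -
  have "{f :: 'a \<Rightarrow> real. \<forall>x. f x \<in> {A x..B x}} = PiE UNIV (\<lambda>x. {A x..B x})"
    by (auto simp: PiE_def Pi_def extensional_def)
  moreover have "compactin (product_topology (\<lambda>_. euclidean) UNIV) (PiE UNIV (\<lambda>x. {A x..B x}))"
    by (simp add: compactin_PiE)
  ultimately show ?thesis by (simp add: euclidean_product_topology)
qed

lemma homeomorphism_if_compact_preimage_cball:
  fixes f :: "'a::topological_space \<Rightarrow> 'b::euclidean_space"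
  assumes cont: "continuous_on S f" and inj: "inj_on f S" and onto: "f ` S = UNIV"
    and proper: "\<And>R. compact (S \<inter> f -` cball 0 R)"
  shows "homeomorphism S UNIV f (inv_into S f)"
proof -
  have cont_cball: "continuous_on (cball 0 R) (inv_into S f)" for R
  proof -
    have "f ` (S \<inter> f -` cball 0 R) = f ` S \<inter> cball 0 R" by blast
    then have "f ` (S \<inter> f -` cball 0 R) = cball 0 R" using onto by simp
    moreover have "continuous_on (f ` (S \<inter> f -` cball 0 R)) (inv_into S f)"
      using inj by (intro continuous_on_inv continuous_on_subset[OF cont] proper) auto
    ultimately show ?thesis by simp
  qed
  have "continuous_on UNIV (inv_into S f)"
  proof (intro continuous_at_imp_continuous_on ballI)
    fix y :: 'b
    have "y \<in> interior (cball 0 (norm y + 1))" by simp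
    then show "isCont (inv_into S f) y" using continuous_on_interior[OF cont_cball] by blast
  qed
  then show ?thesis
  proof (rule homeomorphismI[OF cont])
    show "inv_into S f ` UNIV \<subseteq> S" by (simp add: image_subsetI inv_into_into onto)
    show "inv_into S f (f x) = x" if "x \<in> S" for x using inj that by simp
    show "f (inv_into S f y) = y" for y by (simp add: f_inv_into_f onto)
  qed simp
qed

section \<open>The Laplacian on a periodic graph\<close>

locale periodic_graph =
  fixes b :: "'x::countable \<Rightarrow> 'x \<Rightarrow> real" and c :: "'x \<Rightarrow> real"
    and act :: "int^'d \<Rightarrow> 'x \<Rightarrow> 'x" and x0 :: 'x
  assumes b_nonneg: "\<And>x y. 0 \<le> b x y"
    and loc_finite: "\<And>x. finite {y. 0 < b x y \<or> 0 < b y x}"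
    and connected: "\<And>x y. (x, y) \<in> {(u, v). 0 < b u v}\<^sup>*"
    and act_zero: "\<And>x. act 0 x = x"
    and act_add: "\<And>z w x. act (z + w) x = act z (act w x)"
    and act_free: "\<And>z x. act z x = x \<Longrightarrow> z = 0"
    and cocompact: "\<exists>F. finite F \<and> (\<forall>x. \<exists>z. \<exists>y\<in>F. x = act z y)"
    and invariant: "Hinvariant b c act"
begin

definition nbhd :: "'x \<Rightarrow> 'x set" where
  "nbhd x = {y. 0 < b x y \<or> 0 < b y x}"

text \<open>Loops \<open>b x x\<close> do not contribute to \<open>H\<close>.\<close>
definition edge_wt :: "'x \<Rightarrow> 'x \<Rightarrow> real" where
  "edge_wt x y = (if x = y then 0 else b x y)"

definition adj :: "('x \<Rightarrow> real) \<Rightarrow> 'x \<Rightarrow> real" where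
  "adj f x = (\<Sum>y\<in>nbhd x. edge_wt x y * f y)"

definition diag :: "'x \<Rightarrow> real" where
  "diag x = (\<Sum>y\<in>nbhd x. edge_wt x y) + c x"

lemma finite_nbhd: "finite (nbhd x)"
  using loc_finite by (simp add: nbhd_def)

lemma edge_wt_nonneg: "0 \<le> edge_wt x y"
  by (simp add: edge_wt_def b_nonneg)

lemma edge_wt_self [simp]: "edge_wt x x = 0"
  by (simp add: edge_wt_def)

lemma edge_wt_eq_0: "y \<notin> nbhd x \<Longrightarrow> edge_wt x y = 0"
  using b_nonneg[of x y] by (auto simp: nbhd_def edge_wt_def)

lemma adj_eq_sum:
  assumes "finite A" "\<And>y. edge_wt x y \<noteq> 0 \<Longrightarrow> y \<in> A"
  shows "adj f x = (\<Sum>y\<in>A. edge_wt x y * f y)"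
proof -
  have "adj f x = (\<Sum>y\<in>nbhd x \<union> A. edge_wt x y * f y)"
    unfolding adj_def
    by (rule sum.mono_neutral_left[of "nbhd x \<union> A" "nbhd x"]) (auto simp: finite_nbhd assms edge_wt_eq_0)
  also have "\<dots> = (\<Sum>y\<in>A. edge_wt x y * f y)"
    by (rule sum.mono_neutral_right[of "nbhd x \<union> A" A]) (use assms in \<open>auto simp: finite_nbhd\<close>)
  finally show ?thesis .
qed

lemma Hop_eq: "Hop b c f x = diag x * f x - adj f x"
proof -
  have "(\<Sum>\<^sub>\<infinity>y. b x y * (f x - f y)) = (\<Sum>\<^sub>\<infinity>y\<in>nbhd x. b x y * (f x - f y))"
    by (rule infsum_cong_neutral) (auto simp: nbhd_def not_less dest: order.antisym[OF _ b_nonneg])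
  also have "\<dots> = (\<Sum>y\<in>nbhd x. edge_wt x y * (f x - f y))"
    by (simp add: finite_nbhd) (rule sum.cong, auto simp: edge_wt_def)
  also have "\<dots> = f x * (\<Sum>y\<in>nbhd x. edge_wt x y) - adj f x"
    by (simp add: adj_def algebra_simps sum_subtractf sum_distrib_left)
  finally show ?thesis by (simp add: Hop_def diag_def algebra_simps)
qed

lemma Dom_eq_UNIV: "Dom b = UNIV"
proof -
  have "(\<lambda>y. b x y * \<bar>f y\<bar>) summable_on UNIV \<longleftrightarrow> (\<lambda>y. b x y * \<bar>f y\<bar>) summable_on nbhd x" for x f
    by (rule summable_on_cong_neutral) (auto simp: nbhd_def not_less dest: order.antisym[OF _ b_nonneg])
  then show ?thesis by (auto simp: Dom_def finite_nbhd)
qed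

lemma harmonic_iff: "harmonic b c l f \<longleftrightarrow> (\<forall>x. adj f x = (diag x - l) * f x)"
  by (auto simp: harmonic_def Dom_eq_UNIV Hop_eq algebra_simps)

lemma adj_indicator: "adj (\<lambda>v. if v = y then 1 else 0) x = edge_wt x y"
proof -
  have "adj (\<lambda>v. if v = y then 1 else 0) x = (\<Sum>v\<in>nbhd x \<union> {y}. edge_wt x v * (if v = y then 1 else 0))"
    by (rule adj_eq_sum) (auto simp: finite_nbhd edge_wt_eq_0)
  also have "\<dots> = edge_wt x y" by (simp add: finite_nbhd if_distrib cong: if_cong)
  finally show ?thesis .
qed

lemma act_neg_act [simp]: "act (- z) (act z x) = x"
  by (metis act_add act_zero add.left_inverse)

lemma act_act_neg [simp]: "act z (act (- z) x) = x"
  by (metis act_add act_zero add.right_inverse)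

lemma act_eq_iff [simp]: "act z x = act z y \<longleftrightarrow> x = y"
  by (metis act_neg_act)

lemma act_orbit_unique: "act z y = act z' y \<Longrightarrow> z = z'"
  by (metis act_add act_free act_neg_act add.commute eq_neg_iff_add_eq_0 neg_eq_iff_add_eq_0)

text \<open>Invariance of \<open>H\<close>, tested on indicator functions, is invariance of the coefficients.\<close>
lemma Hop_indicator_act:
  "Hop b c (\<lambda>v. if v = act z y then 1 else 0) (act z x) = Hop b c (\<lambda>v. if v = y then 1 else 0) x"
proof -
  have "Tact act z (\<lambda>v. if v = y then 1 else 0) = (\<lambda>v. if v = act z y then 1 else 0)"
    unfolding Tact_def by (rule ext) (metis act_neg_act act_act_neg)
  moreover have "Hop b c (Tact act z (\<lambda>v. if v = y then 1 else 0))
      = Tact act z (Hop b c (\<lambda>v. if v = y then 1 else 0))"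
    using invariant by (simp add: Hinvariant_def Dom_eq_UNIV)
  ultimately show ?thesis by (metis Tact_def act_neg_act)
qed

lemma edge_wt_act [simp]: "edge_wt (act z x) (act z y) = edge_wt x y"
  using Hop_indicator_act[of z y x] by (auto simp: Hop_eq adj_indicator split: if_splits)

lemma diag_act [simp]: "diag (act z x) = diag x"
  using Hop_indicator_act[of z x x] by (simp add: Hop_eq adj_indicator)

lemma adj_comp_act: "adj (\<lambda>v. f (act z v)) x = adj f (act z x)"
proof -
  have "adj f (act z x) = (\<Sum>y\<in>act z ` nbhd x. edge_wt (act z x) y * f y)"
  proof (rule adj_eq_sum)
    fix y assume "edge_wt (act z x) y \<noteq> 0"
    then have "act (- z) y \<in> nbhd x" by (metis edge_wt_act edge_wt_eq_0 act_act_neg)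
    then show "y \<in> act z ` nbhd x" by (metis act_act_neg image_eqI)
  qed (simp add: finite_nbhd)
  also have "\<dots> = (\<Sum>y\<in>nbhd x. edge_wt x y * f (act z y))"
    by (subst sum.reindex) (auto simp: inj_on_def)
  finally show ?thesis by (simp add: adj_def)
qed

lemma adj_scale: "adj (\<lambda>x. k * f x) y = k * adj f y"
  by (simp add: adj_def sum_distrib_left algebra_simps)

lemma adj_diff: "adj (\<lambda>x. f x - g x) y = adj f y - adj g y"
  by (simp add: adj_def sum_subtractf algebra_simps)

lemma adj_mono: "(\<And>x. f x \<le> g x) \<Longrightarrow> adj f y \<le> adj g y"
  unfolding adj_def by (intro sum_mono mult_left_mono) (auto simp: edge_wt_nonneg)

lemma adj_nonneg: "(\<And>x. 0 \<le> f x) \<Longrightarrow> 0 \<le> adj f y"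
  unfolding adj_def by (intro sum_nonneg mult_nonneg_nonneg) (auto simp: edge_wt_nonneg)

lemma edge_wt_le_adj:
  assumes "\<And>x. 0 \<le> f x"
  shows "edge_wt x y * f y \<le> adj f x"
proof (cases "y \<in> nbhd x")
  case True
  then show ?thesis unfolding adj_def
    by (intro member_le_sum[where f = "\<lambda>y. edge_wt x y * f y"])
       (auto simp: finite_nbhd edge_wt_nonneg assms)
next
  case False
  then show ?thesis using adj_nonneg[OF assms] by (simp add: edge_wt_eq_0)
qed

lemma continuous_on_adj:
  assumes "continuous_on S h"
  shows "continuous_on S (\<lambda>p. adj (h p) x)"
  unfolding adj_def using continuous_on_product_then_coordinatewise[OF assms]
  by (intro continuous_intros) auto

lemma equivariant_adj:
  assumes "equivariant act a f"
  shows "equivariant act a (adj f)"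
proof -
  have "adj f (act z x) = exp (pairing a z) * adj f x" for z x
  proof -
    have "(\<lambda>v. f (act z v)) = (\<lambda>v. exp (pairing a z) * f v)"
      using assms by (simp add: equivariant_def)
    then show ?thesis using adj_comp_act[of f z x] by (simp add: adj_scale)
  qed
  then show ?thesis by (simp add: equivariant_def)
qed

lemma invariant_attains_min:
  assumes "\<And>z x. \<phi> (act z x) = (\<phi> x :: real)"
  shows "\<exists>y. \<forall>x. \<phi> y \<le> \<phi> x"
proof -
  obtain F where F: "finite F" "\<And>x. \<exists>z. \<exists>y\<in>F. x = act z y" using cocompact by blast
  then have "Min (\<phi> ` F) \<in> \<phi> ` F" by (intro Min_in) auto
  then obtain y where y: "y \<in> F" "\<phi> y = Min (\<phi> ` F)" by auto
  have "\<phi> y \<le> \<phi> x" for x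
  proof -
    obtain z y' where "y' \<in> F" "x = act z y'" using F by blast
    then show ?thesis using y F(1) assms by simp
  qed
  then show ?thesis by blast
qed

lemma diag_bounded: "\<exists>M. \<forall>x. diag x < M"
proof -
  obtain y where y: "\<And>x. - diag y \<le> - diag x"
    using invariant_attains_min[of "\<lambda>x. - diag x"] by auto
  have "diag x < diag y + 1" for x using y[of x] by linarith
  then show ?thesis by blast
qed

section \<open>Supersolutions and the Harnack inequality\<close>

definition supersol :: "real \<Rightarrow> ('x \<Rightarrow> real) \<Rightarrow> bool" where
  "supersol l f \<longleftrightarrow> (\<forall>x. 0 \<le> f x) \<and> (\<forall>x. adj f x \<le> (diag x - l) * f x)"

lemma supersol_vanishes_everywhere:
  assumes sup: "supersol l h" and zero: "h x = 0"
  shows "h y = 0"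
  using connected[of x y]
proof (induction rule: rtrancl_induct)
  case base
  then show ?case using zero .
next
  case (step u v)
  show ?case
  proof (cases "u = v")
    case False
    with step have pos: "0 < edge_wt u v" by (simp add: edge_wt_def)
    have "edge_wt u v * h v \<le> adj h u" "0 \<le> h v" "adj h u \<le> (diag u - l) * h u"
      using sup edge_wt_le_adj[of h u v] unfolding supersol_def by blast+
    then have "edge_wt u v * h v \<le> 0" using step.IH by simp
    then show ?thesis using pos \<open>0 \<le> h v\<close> by (simp add: mult_le_0_iff)
  qed (use step in simp)
qed

lemma supersol_pos:
  assumes "supersol l f" "f x0 \<noteq> 0"
  shows "0 < f x"
  using assms supersol_vanishes_everywhere[OF assms(1), of x x0]
  by (auto simp: supersol_def order.order_iff_strict)

lemma supersol_eigenvalue_le: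
  assumes "supersol l f" "f x0 = 1"
  shows "l \<le> diag x0"
proof -
  have "adj f x0 \<le> (diag x0 - l) * f x0" using assms(1) unfolding supersol_def by blast
  moreover have "0 \<le> adj f x0" using assms(1) adj_nonneg[of f x0] unfolding supersol_def by blast
  ultimately show ?thesis using assms(2) by simp
qed

lemma harnack_point:
  "\<exists>C. \<forall>f l. supersol l f \<and> f x0 = 1 \<and> L \<le> l \<longrightarrow> f y \<le> C"
  using connected[of x0 y]
proof (induction rule: rtrancl_induct)
  case base
  then show ?case by auto
next
  case (step u v)
  then obtain C where C: "\<And>f l. supersol l f \<and> f x0 = 1 \<and> L \<le> l \<Longrightarrow> f u \<le> C"
    by blast
  show ?case
  proof (cases "u = v")
    case False
    with step have pos: "0 < edge_wt u v" by (simp add: edge_wt_def)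
    have "f v \<le> max 0 (diag u - L) * max 0 C / edge_wt u v"
      if f: "supersol l f \<and> f x0 = 1 \<and> L \<le> l" for f l
    proof -
      have fu: "0 \<le> f u" "f u \<le> C" using C f by (auto simp: supersol_def)
      have "edge_wt u v * f v \<le> adj f u"
        using f by (intro edge_wt_le_adj) (simp add: supersol_def)
      also have "\<dots> \<le> (diag u - l) * f u" using f by (simp add: supersol_def)
      also have "\<dots> \<le> (diag u - L) * f u" using f fu by (intro mult_right_mono) auto
      also have "\<dots> \<le> max 0 (diag u - L) * max 0 C" using fu by (intro mult_mono) auto
      finally show ?thesis using pos by (simp add: field_simps mult.commute)
    qed
    then show ?thesis by blast
  qed (use C in blast)
qed

lemma harnack: "\<exists>C. \<forall>f l y. supersol l f \<and> f x0 = 1 \<and> L \<le> l \<longrightarrow> f y \<le> C y"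
  using harnack_point[of L] by metis

section \<open>Positive harmonic functions\<close>

definition pos_harmonic :: "real \<Rightarrow> ('x \<Rightarrow> real) set" where
  "pos_harmonic l = {f. f x0 = 1 \<and> (\<forall>x. 0 \<le> f x) \<and> (\<forall>x. adj f x = (diag x - l) * f x)}"

lemma pos_harmonic_supersol: "f \<in> pos_harmonic l \<Longrightarrow> supersol l f"
  by (simp add: pos_harmonic_def supersol_def)

lemma pos_harmonic_pos:
  assumes "f \<in> pos_harmonic l"
  shows "0 < f x"
  using supersol_pos[OF pos_harmonic_supersol[OF assms]] assms by (simp add: pos_harmonic_def)

lemma pos_harmonic_x0: "f \<in> pos_harmonic l \<Longrightarrow> f x0 = 1"
  by (simp add: pos_harmonic_def)

definition eigenvalue_of :: "('x \<Rightarrow> real) \<Rightarrow> real" where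
  "eigenvalue_of f = diag x0 - adj f x0"

lemma pos_harmonic_eigenvalue: "f \<in> pos_harmonic l \<Longrightarrow> eigenvalue_of f = l"
  by (simp add: pos_harmonic_def eigenvalue_of_def)

lemma closed_pos_harmonic: "closed (pos_harmonic l)"
proof -
  have "pos_harmonic l = {f. f x0 = 1} \<inter> (\<Inter>x. {f. 0 \<le> f x}) \<inter> (\<Inter>x. {f. adj f x = (diag x - l) * f x})"
    by (auto simp: pos_harmonic_def)
  moreover have "continuous_on UNIV (\<lambda>f::'x \<Rightarrow> real. f y)"
    and "continuous_on UNIV (\<lambda>f::'x \<Rightarrow> real. adj f y)" for y
    using continuous_on_adj[OF continuous_on_id] by simp_all
  ultimately show ?thesis
    by (simp only:) (intro closed_Int closed_INT ballI closed_Collect_le closed_Collect_eq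
        continuous_on_const continuous_on_mult continuous_on_diff; assumption)
qed

lemma Kset_eq: "Kset b c x0 l = pos_harmonic l"
proof -
  have "{f. (\<forall>x. 0 \<le> f x) \<and> f \<noteq> (\<lambda>_. 0) \<and> harmonic b c l f \<and> f x0 = 1} = pos_harmonic l"
    by (auto simp: pos_harmonic_def harmonic_iff)
  then show ?thesis by (simp add: Kset_def closed_pos_harmonic)
qed

lemma MI_eq: "MI b c act x0 I = {f. \<exists>l\<in>I. f \<in> pos_harmonic l \<and> (\<exists>a. equivariant act a f)}"
  by (auto simp: MI_def Mset_def Kset_eq dest: multiplicative_imp_equivariant
      intro: equivariant_imp_multiplicative)

lemma rho_pos_harmonic: "f \<in> pos_harmonic l \<Longrightarrow> equivariant act a f \<Longrightarrow> rho act f = a"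
  by (rule rho_eqI[of act a f x0]) (simp_all add: pos_harmonic_x0)

lemma MI_pos: "f \<in> MI b c act x0 I \<Longrightarrow> 0 < f x"
  by (auto simp: MI_eq intro: pos_harmonic_pos)

lemma rho_eq_ln:
  assumes "f \<in> pos_harmonic l" "equivariant act a f"
  shows "rho act f = (\<chi> i. ln (f (act (axis i 1) x0)))"
proof -
  have "rho act f = a" using assms by (rule rho_pos_harmonic)
  moreover have "f (act (axis i 1) x0) = exp (a $ i)" for i
    using assms by (simp add: equivariant_def pairing_axis pos_harmonic_def)
  ultimately show ?thesis by (simp add: vec_eq_iff)
qed

lemma continuous_on_rho: "continuous_on (MI b c act x0 I) (rho act)"
proof -
  have "continuous_on (MI b c act x0 I) (\<lambda>f. \<chi> i. ln (f (act (axis i 1) x0)))"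
  proof (intro continuous_on_vec_lambda continuous_on_ln ballI)
    show "continuous_on (MI b c act x0 I) (\<lambda>f. f (act (axis i 1) x0))" for i
      by (rule continuous_on_product_then_coordinatewise[OF continuous_on_id])
    show "f (act (axis i 1) x0) \<noteq> 0" if "f \<in> MI b c act x0 I" for f i
      using MI_pos[OF that] by (metis less_irrefl)
  qed
  moreover have "(\<chi> i. ln (f (act (axis i 1) x0))) = rho act f" if "f \<in> MI b c act x0 I" for f
    using that rho_eq_ln by (auto simp: MI_eq)
  ultimately show ?thesis by (rule continuous_on_eq)
qed

section \<open>Uniqueness\<close>

lemma equivariant_ratio_min:
  assumes "equivariant act a f" "equivariant act a g" "\<And>x. 0 < f x" "\<And>x. 0 < g x"
  shows "\<exists>y t. 0 < t \<and> (\<forall>x. t * g x \<le> f x) \<and> f y = t * g y"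
proof -
  have "f (act z x) / g (act z x) = f x / g x" for z x
    using assms(1,2) by (simp add: equivariant_def)
  then obtain y where y: "\<And>x. f y / g y \<le> f x / g x"
    using invariant_attains_min[of "\<lambda>x. f x / g x"] by blast
  show ?thesis
  proof (intro exI conjI allI)
    show "0 < f y / g y" using assms(3,4) by simp
    show "f y / g y * g x \<le> f x" for x using y[of x] assms(4)[of x] by (simp add: pos_le_divide_eq)
    show "f y = f y / g y * g y" using assms(4)[of y] by simp
  qed
qed

lemma equivariant_harmonic_eigenvalue_le:
  assumes f: "f \<in> pos_harmonic l" "equivariant act a f"
    and g: "g \<in> pos_harmonic m" "equivariant act a g"
  shows "l \<le> m"
proof -
  obtain y t where t: "0 < t" "\<And>x. t * g x \<le> f x" "f y = t * g y"
    using equivariant_ratio_min[OF f(2) g(2)] pos_harmonic_pos f(1) g(1) by blast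
  have "t * adj g y \<le> adj f y"
    using adj_mono[of "\<lambda>x. t * g x" f y] t(2) by (simp add: adj_scale)
  moreover have "adj f y = (diag y - l) * f y" "adj g y = (diag y - m) * g y"
    using f(1) g(1) by (simp_all add: pos_harmonic_def)
  ultimately have "(diag y - m) * f y \<le> (diag y - l) * f y"
    using t(3) by (simp add: algebra_simps)
  then show ?thesis using pos_harmonic_pos[OF f(1), of y] by (simp add: mult_le_cancel_right)
qed

lemma equivariant_harmonic_unique:
  assumes f: "f \<in> pos_harmonic l" "equivariant act a f"
    and g: "g \<in> pos_harmonic m" "equivariant act a g"
  shows "f = g"
proof -
  have "l = m"
    using equivariant_harmonic_eigenvalue_le[OF f g] equivariant_harmonic_eigenvalue_le[OF g f] by simp
  obtain y t where t: "0 < t" "\<And>x. t * g x \<le> f x" "f y = t * g y"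
    using equivariant_ratio_min[OF f(2) g(2)] pos_harmonic_pos f(1) g(1) by blast
  define h where "h = (\<lambda>x. f x - t * g x)"
  have adj_h: "adj h x = (diag x - l) * h x" for x
  proof -
    have eqs: "adj f x = (diag x - l) * f x" "adj g x = (diag x - l) * g x"
      using f(1) g(1) \<open>l = m\<close> by (simp_all add: pos_harmonic_def)
    have "adj h x = adj f x - t * adj g x" by (simp add: h_def adj_diff adj_scale)
    also have "\<dots> = (diag x - l) * h x" by (simp add: eqs h_def algebra_simps)
    finally show ?thesis .
  qed
  have "0 \<le> h x" for x using t(2)[of x] by (simp add: h_def)
  then have "supersol l h" by (simp add: supersol_def adj_h)
  moreover have "h y = 0" using t(3) by (simp add: h_def)
  ultimately have h0: "h x = 0" for x by (rule supersol_vanishes_everywhere)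
  then have "t = 1" using h0[of x0] f(1) g(1) by (simp add: h_def pos_harmonic_def)
  then have "f x = g x" for x using h0[of x] by (simp add: h_def)
  then show ?thesis by blast
qed

section \<open>Existence\<close>

text \<open>\<open>orbit_exp a y\<close> is \<open>exp \<langle>a, z\<rangle>\<close> at \<open>z y\<close> and \<open>0\<close> off the orbit of \<open>y\<close>; freeness makes \<open>z\<close> unique.\<close>
definition orbit_exp :: "real^'d \<Rightarrow> 'x \<Rightarrow> 'x \<Rightarrow> real" where
  "orbit_exp a y x = (if \<exists>z. act z y = x then exp (pairing a (THE z. act z y = x)) else 0)"

lemma orbit_exp_act: "orbit_exp a y (act w x) = exp (pairing a w) * orbit_exp a y x"
proof (cases "\<exists>z. act z y = x")
  case True
  then obtain z where z: "act z y = x" by blast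
  then have wz: "act (w + z) y = act w x" by (simp add: act_add)
  have "(THE z. act z y = x) = z" using z act_orbit_unique by blast
  moreover have "(THE z'. act z' y = act w x) = w + z"
  proof (rule the_equality)
    show "z' = w + z" if "act z' y = act w x" for z'
      using that wz act_orbit_unique[of z' y "w + z"] by simp
  qed (fact wz)
  ultimately show ?thesis using True wz unfolding orbit_exp_def by (auto simp: pairing_add exp_add)
next
  case False
  have "\<not> (\<exists>z'. act z' y = act w x)"
  proof
    assume "\<exists>z'. act z' y = act w x"
    then obtain z' where "act z' y = act w x" by blast
    then have "act (- w) (act z' y) = x" by simp
    then have "act (- w + z') y = x" by (simp only: act_add)
    then show False using False by blast
  qed
  then show ?thesis using False by (simp add: orbit_exp_def)
qed

lemma equivariant_positive_exists: "\<exists>u. equivariant act a u \<and> (\<forall>x. 0 < u x)"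
proof -
  obtain F where F: "finite F" "\<And>x. \<exists>z. \<exists>y\<in>F. x = act z y" using cocompact by blast
  define u where "u x = (\<Sum>y\<in>F. orbit_exp a y x)" for x
  have "equivariant act a u" by (simp add: equivariant_def u_def orbit_exp_act sum_distrib_left)
  moreover have "0 < u x" for x
  proof -
    obtain z y where zy: "y \<in> F" "x = act z y" using F by blast
    then have "0 < orbit_exp a y x" by (auto simp: orbit_exp_def)
    also have "\<dots> \<le> u x" unfolding u_def using F(1) zy(1)
      by (intro member_le_sum) (auto simp: orbit_exp_def)
    finally show ?thesis .
  qed
  ultimately show ?thesis by blast
qed

text \<open>\<open>diag - adj g / g\<close> is \<open>\<int>\<^sup>d\<close>-invariant, so its infimum over \<open>X\<close> is attained.\<close>
lemma equivariant_best_supersol: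
  assumes "equivariant act a g" "\<And>x. 0 < g x"
  shows "\<exists>y. supersol (diag y - adj g y / g y) g"
proof -
  have "diag (act z x) - adj g (act z x) / g (act z x) = diag x - adj g x / g x" for z x
    using assms(1) equivariant_adj[OF assms(1)] by (simp add: equivariant_def)
  then obtain y where y: "\<And>x. diag y - adj g y / g y \<le> diag x - adj g x / g x"
    using invariant_attains_min[of "\<lambda>x. diag x - adj g x / g x"] by blast
  have "adj g x \<le> (diag x - (diag y - adj g y / g y)) * g x" for x
  proof -
    have "adj g x / g x \<le> diag x - (diag y - adj g y / g y)" using y[of x] by simp
    then show ?thesis using assms(2)[of x] by (simp add: pos_divide_le_eq)
  qed
  then show ?thesis using assms(2) less_imp_le by (auto simp: supersol_def)
qed

lemma equivariant_supersol_exists: "\<exists>f l. equivariant act a f \<and> supersol l f \<and> f x0 = 1"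
proof -
  obtain u where u: "equivariant act a u" "\<And>x. 0 < u x" using equivariant_positive_exists by blast
  define f where "f = (\<lambda>x. u x / u x0)"
  have "equivariant act a f" using equivariant_scale[OF u(1), of "1 / u x0"] by (simp add: f_def)
  moreover have "0 < f x" for x using u(2) by (simp add: f_def)
  moreover have "f x0 = 1" using u(2)[of x0] by (simp add: f_def)
  ultimately show ?thesis using equivariant_best_supersol by blast
qed

definition equivariant_supersols :: "real^'d \<Rightarrow> real \<Rightarrow> (('x \<Rightarrow> real) \<times> real) set" where
  "equivariant_supersols a L = {(f, l). equivariant act a f \<and> supersol l f \<and> f x0 = 1 \<and> L \<le> l}"

lemma closed_equivariant_supersols: "closed (equivariant_supersols a L)"
proof -
  have "equivariant_supersols a L =
      (\<Inter>z. \<Inter>x. {p. fst p (act z x) = exp (pairing a z) * fst p x}) \<inter> (\<Inter>x. {p. 0 \<le> fst p x})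
      \<inter> (\<Inter>x. {p. adj (fst p) x \<le> (diag x - snd p) * fst p x}) \<inter> {p. fst p x0 = 1} \<inter> {p. L \<le> snd p}"
    by (auto simp: equivariant_supersols_def equivariant_def supersol_def)
  moreover have "continuous_on UNIV (\<lambda>p::('x \<Rightarrow> real) \<times> real. fst p y)" for y
    by (rule continuous_on_product_then_coordinatewise) (intro continuous_intros)
  moreover have "continuous_on UNIV (\<lambda>p::('x \<Rightarrow> real) \<times> real. adj (fst p) y)" for y
    by (rule continuous_on_adj) (intro continuous_intros)
  moreover have "continuous_on UNIV (\<lambda>p::('x \<Rightarrow> real) \<times> real. snd p)"
    by (intro continuous_intros)
  ultimately show ?thesis
    by (simp only:) (intro closed_Int closed_INT ballI closed_Collect_le closed_Collect_eq
        continuous_on_const continuous_on_mult continuous_on_diff; assumption)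
qed

lemma compact_equivariant_supersols: "compact (equivariant_supersols a L)"
proof -
  obtain C where C: "\<And>f l y. supersol l f \<Longrightarrow> f x0 = 1 \<Longrightarrow> L \<le> l \<Longrightarrow> f y \<le> C y"
    using harnack[of L] by blast
  define box where "box = {f. \<forall>x. f x \<in> {0..C x}} \<times> {L..diag x0}"
  have "p \<in> box" if mem: "p \<in> equivariant_supersols a L" for p
  proof -
    obtain f l where p: "p = (f, l)" "supersol l f" "f x0 = 1" "L \<le> l"
      using mem by (cases p) (auto simp: equivariant_supersols_def)
    then have "0 \<le> f x" "f x \<le> C x" for x using C by (auto simp: supersol_def)
    then show ?thesis using p supersol_eigenvalue_le[OF p(2,3)] by (simp add: box_def)
  qed
  then have "box \<inter> equivariant_supersols a L = equivariant_supersols a L" by blast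
  moreover have "compact (box \<inter> equivariant_supersols a L)"
    unfolding box_def
    by (intro compact_Int_closed compact_Times compact_pointwise_box compact_Icc
        closed_equivariant_supersols)
  ultimately show ?thesis by simp
qed

text \<open>\<open>M - H\<close>, which is positivity preserving once \<open>M\<close> exceeds \<open>diag\<close>.\<close>
definition shifted_op :: "real \<Rightarrow> ('x \<Rightarrow> real) \<Rightarrow> 'x \<Rightarrow> real" where
  "shifted_op M g x = adj g x + (M - diag x) * g x"

lemma shifted_op_linear: "shifted_op M (\<lambda>x. s * f x - g x) x = s * shifted_op M f x - shifted_op M g x"
  by (simp add: shifted_op_def adj_diff adj_scale algebra_simps)

lemma equivariant_shifted_op: "equivariant act a g \<Longrightarrow> equivariant act a (shifted_op M g)"
  using equivariant_adj[of a g] by (simp add: equivariant_def shifted_op_def algebra_simps)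

lemma shifted_op_ge:
  assumes "\<And>x. diag x < M" "\<And>x. 0 \<le> g x"
  shows "(M - diag x) * g x \<le> shifted_op M g x" and "edge_wt x y * g y \<le> shifted_op M g x"
proof -
  have "0 \<le> (M - diag x) * g x" using assms(1)[of x] assms(2)[of x] by simp
  then show "edge_wt x y * g y \<le> shifted_op M g x"
    using edge_wt_le_adj[of g x y, OF assms(2)] by (simp add: shifted_op_def)
  show "(M - diag x) * g x \<le> shifted_op M g x"
    using adj_nonneg[of g x, OF assms(2)] by (simp add: shifted_op_def)
qed

lemma equivariant_shifted_op_pow:
  "equivariant act a g \<Longrightarrow> equivariant act a ((shifted_op M ^^ k) g)"
  by (induction k) (simp_all add: equivariant_shifted_op)

lemma shifted_op_pow_eq:
  assumes "shifted_op M f = (\<lambda>x. s * f x - w x)"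
  shows "shifted_op M ((shifted_op M ^^ k) f) = (\<lambda>x. s * (shifted_op M ^^ k) f x - (shifted_op M ^^ k) w x)"
proof (induction k)
  case 0
  then show ?case using assms by simp
next
  case (Suc k)
  then show ?case by (simp add: fun_eq_iff shifted_op_linear)
qed

lemma shifted_op_pos:
  assumes M: "\<And>x. diag x < M" and g: "\<And>x. 0 \<le> g x" "0 < g y" and y: "y = x \<or> 0 < b x y"
  shows "0 < shifted_op M g x"
proof (cases "y = x")
  case True
  then have "0 < (M - diag x) * g x" using M[of x] g(2) by simp
  then show ?thesis using shifted_op_ge(1)[of M g, OF M g(1)] by (rule less_le_trans)
next
  case False
  then have "0 < edge_wt x y * g y" using y g(2) by (simp add: edge_wt_def)
  then show ?thesis using shifted_op_ge(2)[of M g, OF M g(1)] by (rule less_le_trans)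
qed

lemma shifted_op_pow_nonneg:
  assumes M: "\<And>x. diag x < M" and g: "\<And>x. 0 \<le> g x"
  shows "0 \<le> (shifted_op M ^^ k) g x"
proof (induction k arbitrary: x)
  case (Suc k)
  have "0 \<le> (M - diag x) * (shifted_op M ^^ k) g x" using M[of x] Suc by simp
  then have "0 \<le> shifted_op M ((shifted_op M ^^ k) g) x"
    using shifted_op_ge(1)[of M "(shifted_op M ^^ k) g" x, OF M Suc] by linarith
  then show ?case by simp
qed (simp add: g)

text \<open>Positivity spreads by one edge per application of \<open>M - H\<close>.\<close>
lemma shifted_op_pow_pos:
  assumes M: "\<And>x. diag x < M" and g: "\<And>x. 0 \<le> g x" "0 < g t"
    and path: "(x, t) \<in> {(u, v). 0 < b u v} ^^ j" "j \<le> k"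
  shows "0 < (shifted_op M ^^ k) g x"
  using path
proof (induction k arbitrary: x j)
  case 0
  then show ?case using g(2) by simp
next
  case (Suc k)
  have nonneg: "\<And>x. 0 \<le> (shifted_op M ^^ k) g x" using shifted_op_pow_nonneg[OF M g(1)] .
  show ?case
  proof (cases "j \<le> k")
    case True
    then have "0 < (shifted_op M ^^ k) g x" using Suc.IH Suc.prems(1) by blast
    then have "0 < shifted_op M ((shifted_op M ^^ k) g) x"
      using shifted_op_pos[of M "(shifted_op M ^^ k) g" x x, OF M nonneg] by blast
    then show ?thesis by simp
  next
    case False
    then have "j = Suc k" using Suc.prems(2) by simp
    then have "(x, t) \<in> {(u, v). 0 < b u v} ^^ Suc k" using Suc.prems(1) by simp
    from relpow_Suc_D2[OF this] obtain y where "0 < b x y" "(y, t) \<in> {(u, v). 0 < b u v} ^^ k"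
      by blast
    then have "0 < (shifted_op M ^^ k) g y" using Suc.IH by blast
    then have "0 < shifted_op M ((shifted_op M ^^ k) g) x"
      using shifted_op_pos[of M "(shifted_op M ^^ k) g" y x, OF M nonneg] \<open>0 < b x y\<close> by blast
    then show ?thesis by simp
  qed
qed

lemma shifted_op_eventually_pos:
  assumes M: "\<And>x. diag x < M" and g: "equivariant act a g" "\<And>x. 0 \<le> g x" "0 < g t"
  shows "\<exists>N. \<forall>x. 0 < (shifted_op M ^^ N) g x"
proof -
  obtain F where F: "finite F" "\<And>x. \<exists>z. \<exists>y\<in>F. x = act z y" using cocompact by blast
  have "\<forall>y. \<exists>n. (y, t) \<in> {(u, v). 0 < b u v} ^^ n" using connected by (simp add: rtrancl_power)
  then obtain dist where dist: "\<And>y. (y, t) \<in> {(u, v). 0 < b u v} ^^ dist y" by metis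
  define N where "N = Max (dist ` F)"
  define h where "h = (shifted_op M ^^ N) g"
  have pos_F: "0 < h y" if "y \<in> F" for y
  proof -
    have "dist y \<le> N" using that F(1) by (simp add: N_def)
    then show ?thesis
      using shifted_op_pow_pos[of M g t y "dist y" N, OF M g(2,3) dist[of y]] by (simp add: h_def)
  qed
  have "equivariant act a h" unfolding h_def using g(1) by (rule equivariant_shifted_op_pow)
  have "0 < h x" for x
  proof -
    obtain z y where "y \<in> F" "x = act z y" using F by blast
    then show ?thesis using pos_F \<open>equivariant act a h\<close> by (simp add: equivariant_def)
  qed
  then show ?thesis unfolding h_def by blast
qed

lemma supersol_scale: "supersol l f \<Longrightarrow> 0 \<le> k \<Longrightarrow> supersol l (\<lambda>x. k * f x)"
  by (simp add: supersol_def adj_scale mult_left_mono mult.left_commute)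

lemma strict_supersol_improve:
  assumes g: "equivariant act a g" "\<And>x. 0 < g x" and strict: "\<And>x. adj g x < (diag x - l) * g x"
  shows "\<exists>h l'. equivariant act a h \<and> supersol l' h \<and> h x0 = 1 \<and> l < l'"
proof -
  obtain y where y: "supersol (diag y - adj g y / g y) g"
    using equivariant_best_supersol[OF g] by blast
  have "adj g y / g y < diag y - l"
    using strict[of y] g(2)[of y] by (simp add: pos_divide_less_eq mult.commute)
  moreover have "supersol (diag y - adj g y / g y) (\<lambda>x. 1 / g x0 * g x)"
    using supersol_scale[OF y, of "1 / g x0"] g(2)[of x0] by simp
  moreover have "equivariant act a (\<lambda>x. 1 / g x0 * g x)" using equivariant_scale[OF g(1)] .
  ultimately show ?thesis using g(2)[of x0] by (intro exI[of _ "\<lambda>x. 1 / g x0 * g x"]) auto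
qed

text \<open>If \<open>w = (H - \<lambda>) f \<ge> 0\<close> does not vanish, then \<open>(H - \<lambda>) (M - H)\<^sup>N f = (M - H)\<^sup>N w > 0\<close> for large \<open>N\<close>.\<close>
lemma supersol_improve:
  assumes f: "equivariant act a f" "supersol l f" "f x0 = 1"
    and strict: "adj f t \<noteq> (diag t - l) * f t"
  shows "\<exists>h l'. equivariant act a h \<and> supersol l' h \<and> h x0 = 1 \<and> l < l'"
proof -
  obtain M where M: "\<And>x. diag x < M" using diag_bounded by blast
  define w where "w = (\<lambda>x. (diag x - l) * f x - adj f x)"
  have f_sup: "adj f x \<le> (diag x - l) * f x" for x using f(2) unfolding supersol_def by blast
  have "equivariant act a w"
    using f(1) equivariant_adj[OF f(1)] by (simp add: w_def equivariant_def algebra_simps)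
  moreover have "0 \<le> w x" for x using f_sup[of x] by (simp add: w_def)
  moreover have "0 < w t" using f_sup[of t] strict by (simp add: w_def)
  ultimately have w: "equivariant act a w" "\<And>x. 0 \<le> w x" "0 < w t" by blast+
  obtain N where N: "\<And>x. 0 < (shifted_op M ^^ N) w x"
    using shifted_op_eventually_pos[OF M w] by blast
  have "shifted_op M f = (\<lambda>x. (M - l) * f x - w x)"
    by (simp add: fun_eq_iff shifted_op_def w_def algebra_simps)
  note power = shifted_op_pow_eq[OF this]
  define g where "g = (shifted_op M ^^ N) f"
  have f_pos: "\<And>x. 0 < f x" using supersol_pos[OF f(2)] f(3) by simp
  have "equivariant act a g" unfolding g_def using f(1) by (rule equivariant_shifted_op_pow)
  moreover have "0 < g x" for x
    using shifted_op_pow_pos[of M f x x 0 N, OF M _ f_pos] f_pos by (simp add: g_def less_imp_le)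
  moreover have "adj g x < (diag x - l) * g x" for x
  proof -
    have "adj g x + (M - diag x) * g x = (M - l) * g x - (shifted_op M ^^ N) w x"
      using fun_cong[OF power[of N], of x] by (simp add: g_def shifted_op_def)
    then show ?thesis using N[of x] by (simp add: algebra_simps)
  qed
  ultimately show ?thesis by (rule strict_supersol_improve)
qed

lemma exists_equivariant_harmonic: "\<exists>f l. f \<in> pos_harmonic l \<and> equivariant act a f"
proof -
  obtain f0 l0 where "equivariant act a f0" "supersol l0 f0" "f0 x0 = 1"
    using equivariant_supersol_exists by blast
  then have "equivariant_supersols a l0 \<noteq> {}" by (auto simp: equivariant_supersols_def)
  then obtain f l where max: "(f, l) \<in> equivariant_supersols a l0"
    and is_max: "\<And>g l'. (g, l') \<in> equivariant_supersols a l0 \<Longrightarrow> l' \<le> l"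
    using continuous_attains_sup[OF compact_equivariant_supersols, of a l0 snd]
    by (fastforce intro: continuous_intros)
  then have f: "equivariant act a f" "supersol l f" "f x0 = 1" and "l0 \<le> l"
    by (auto simp: equivariant_supersols_def)
  have "adj f x = (diag x - l) * f x" for x
  proof (rule ccontr)
    assume "adj f x \<noteq> (diag x - l) * f x"
    then obtain g l' where "equivariant act a g" "supersol l' g" "g x0 = 1" "l < l'"
      using supersol_improve[OF f] by blast
    then show False using is_max[of g l'] \<open>l0 \<le> l\<close> by (auto simp: equivariant_supersols_def)
  qed
  then have "f \<in> pos_harmonic l" using f by (auto simp: pos_harmonic_def supersol_def)
  then show ?thesis using f by blast
qed

section \<open>Compactness\<close>

text \<open>Evaluate \<open>H f = \<lambda> f\<close> at a maximum point \<open>y\<close> of \<open>f\<close> on a fundamental domain: writing a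
  neighbour as \<open>v = z r\<close> with \<open>r\<close> in the domain, \<open>f v \<le> exp (R |z|\<^sub>1) f y\<close>.\<close>
lemma eigenvalue_lower_bound:
  "\<exists>L. \<forall>f l a. f \<in> pos_harmonic l \<and> equivariant act a f \<and> norm a \<le> R \<longrightarrow> L \<le> l"
proof -
  obtain F where F: "finite F" "\<And>x. \<exists>z. \<exists>y\<in>F. x = act z y" using cocompact by blast
  then obtain shift rep where rep: "\<And>x. rep x \<in> F" "\<And>x. x = act (shift x) (rep x)" by metis
  define B where "B v = exp (R * (\<Sum>i\<in>UNIV. \<bar>real_of_int (shift v $ i)\<bar>))" for v
  define bound where "bound y = (\<Sum>v\<in>nbhd y. edge_wt y v * B v)" for y
  define L where "L = Min ((\<lambda>y. diag y - bound y) ` F)"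
  have "L \<le> l" if f: "f \<in> pos_harmonic l" "equivariant act a f" "norm a \<le> R" for f l a
  proof -
    have "F \<noteq> {}" using F by blast
    then have "Max (f ` F) \<in> f ` F" using F(1) by simp
    then obtain y where y: "y \<in> F" "f y = Max (f ` F)" by auto
    have f_le: "f v \<le> B v * f y" for v
    proof -
      have "f v = f (act (shift v) (rep v))" using rep(2)[of v] by simp
      also have "\<dots> = exp (pairing a (shift v)) * f (rep v)" using f(2) by (simp add: equivariant_def)
      also have "\<dots> \<le> B v * f y"
        using pairing_le_norm[OF f(3), of "shift v"] y F(1) rep(1)[of v] pos_harmonic_pos[OF f(1)]
        by (intro mult_mono) (auto simp: B_def less_imp_le)
      finally show ?thesis .
    qed
    have "adj f y \<le> (\<Sum>v\<in>nbhd y. edge_wt y v * (B v * f y))"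
      unfolding adj_def by (intro sum_mono mult_left_mono f_le edge_wt_nonneg)
    also have "\<dots> = bound y * f y" by (simp add: bound_def sum_distrib_right mult.assoc)
    finally have "(diag y - l) * f y \<le> bound y * f y" using f(1) by (simp add: pos_harmonic_def)
    then have "diag y - bound y \<le> l" using pos_harmonic_pos[OF f(1), of y] by simp
    moreover have "L \<le> diag y - bound y" unfolding L_def using F(1) y(1) by simp
    ultimately show ?thesis by simp
  qed
  then show ?thesis by blast
qed

lemma equivariant_iff_orbit_mult:
  assumes "f x0 = 1" "\<And>x. 0 < f x"
  shows "(\<exists>a. equivariant act a f) \<longleftrightarrow> (\<forall>z x. f (act z x) = f (act z x0) * f x)"
proof
  assume mult: "\<forall>z x. f (act z x) = f (act z x0) * f x"
  have "is_character (\<lambda>z. f (act z x0))"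
    unfolding is_character_def
  proof (intro conjI allI)
    show "0 < f (act z x0)" for z by (rule assms(2))
    show "f (act (z + w) x0) = f (act z x0) * f (act w x0)" for z w
      using mult[rule_format, of z "act w x0"] by (simp only: act_add)
  qed
  then have "multiplicative act f (\<lambda>z. f (act z x0))"
    unfolding multiplicative_def using mult by blast
  then show "\<exists>a. equivariant act a f" by (blast dest: multiplicative_imp_equivariant)
next
  assume "\<exists>a. equivariant act a f"
  then obtain a where a: "\<And>z x. f (act z x) = exp (pairing a z) * f x"
    by (auto simp: equivariant_def)
  show "\<forall>z x. f (act z x) = f (act z x0) * f x" by (simp add: a assms(1))
qed

lemma MI_interval_eq:
  "MI b c act x0 {l1..l2} = {f. f \<in> pos_harmonic (eigenvalue_of f) \<and> eigenvalue_of f \<in> {l1..l2}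
      \<and> (\<forall>z x. f (act z x) = f (act z x0) * f x)}"
proof (intro set_eqI iffI)
  fix f assume "f \<in> MI b c act x0 {l1..l2}"
  then obtain l a where l: "l \<in> {l1..l2}" "f \<in> pos_harmonic l" "equivariant act a f"
    by (auto simp: MI_eq)
  moreover have "\<forall>z x. f (act z x) = f (act z x0) * f x"
    using equivariant_iff_orbit_mult[of f] l pos_harmonic_pos[OF l(2)]
    by (blast intro: pos_harmonic_x0)
  ultimately show "f \<in> {f. f \<in> pos_harmonic (eigenvalue_of f) \<and> eigenvalue_of f \<in> {l1..l2}
      \<and> (\<forall>z x. f (act z x) = f (act z x0) * f x)}"
    using pos_harmonic_eigenvalue[OF l(2)] by blast
next
  fix f assume "f \<in> {f. f \<in> pos_harmonic (eigenvalue_of f) \<and> eigenvalue_of f \<in> {l1..l2}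
      \<and> (\<forall>z x. f (act z x) = f (act z x0) * f x)}"
  then have f: "f \<in> pos_harmonic (eigenvalue_of f)" "eigenvalue_of f \<in> {l1..l2}"
    "\<forall>z x. f (act z x) = f (act z x0) * f x"
    by blast+
  then have "\<exists>a. equivariant act a f"
    using equivariant_iff_orbit_mult[of f] pos_harmonic_pos[OF f(1)] by (blast intro: pos_harmonic_x0)
  then show "f \<in> MI b c act x0 {l1..l2}" unfolding MI_eq using f(1,2) by blast
qed

lemma closed_MI_interval: "closed (MI b c act x0 {l1..l2})"
proof -
  have "MI b c act x0 {l1..l2} = {f. f x0 = 1} \<inter> (\<Inter>x. {f. 0 \<le> f x})
      \<inter> (\<Inter>x. {f. adj f x = (diag x - eigenvalue_of f) * f x})
      \<inter> {f. l1 \<le> eigenvalue_of f} \<inter> {f. eigenvalue_of f \<le> l2}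
      \<inter> (\<Inter>z. \<Inter>x. {f. f (act z x) = f (act z x0) * f x})"
    unfolding MI_interval_eq pos_harmonic_def by auto
  moreover have cont_eval: "continuous_on UNIV (\<lambda>f::'x \<Rightarrow> real. f y)"
    and cont_adj: "continuous_on UNIV (\<lambda>f::'x \<Rightarrow> real. adj f y)" for y
    using continuous_on_adj[OF continuous_on_id] by simp_all
  moreover have "continuous_on UNIV eigenvalue_of"
    unfolding eigenvalue_of_def by (intro continuous_on_diff continuous_on_const cont_adj)
  ultimately show ?thesis
    by (simp only:) (intro closed_Int closed_INT ballI closed_Collect_le closed_Collect_eq
        continuous_on_const continuous_on_mult continuous_on_diff; assumption)
qed

lemma compact_MI_interval: "compact (MI b c act x0 {l1..l2})"
proof -
  obtain C where C: "\<And>f l y. supersol l f \<Longrightarrow> f x0 = 1 \<Longrightarrow> l1 \<le> l \<Longrightarrow> f y \<le> C y"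
    using harnack[of l1] by blast
  have "f \<in> {f. \<forall>x. f x \<in> {0..C x}}" if mem: "f \<in> MI b c act x0 {l1..l2}" for f
  proof -
    obtain l where "l1 \<le> l" "f \<in> pos_harmonic l" using mem by (auto simp: MI_eq)
    then have "supersol l f" "f x0 = 1" "l1 \<le> l" by (auto intro: pos_harmonic_supersol pos_harmonic_x0)
    then show ?thesis using C by (auto simp: supersol_def)
  qed
  then have "{f. \<forall>x. f x \<in> {0..C x}} \<inter> MI b c act x0 {l1..l2} = MI b c act x0 {l1..l2}" by blast
  moreover have "compact ({f. \<forall>x. f x \<in> {0..C x}} \<inter> MI b c act x0 {l1..l2})"
    by (intro compact_Int_closed compact_pointwise_box closed_MI_interval)
  ultimately show ?thesis by simp
qed

section \<open>The homeomorphism\<close>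

lemma le_lambda0:
  assumes "f \<in> pos_harmonic l" "equivariant act a f"
  shows "l \<le> lambda0 b c act x0"
proof -
  have bound: "m \<le> diag x0" if nonempty: "Mset b c act x0 m \<noteq> {}" for m
  proof -
    obtain g where "g \<in> Mset b c act x0 m" using nonempty by blast
    then have "g \<in> pos_harmonic m" by (simp add: Mset_def Kset_eq)
    then show ?thesis using supersol_eigenvalue_le pos_harmonic_supersol pos_harmonic_x0 by blast
  qed
  have "f \<in> Mset b c act x0 l"
    using assms equivariant_imp_multiplicative by (auto simp: Mset_def Kset_eq)
  then show ?thesis
    unfolding lambda0_def using bound by (intro cSup_upper) (auto simp: bdd_above_def)
qed

lemma MI_upto_lambda0: "MI b c act x0 {..lambda0 b c act x0} = MI b c act x0 UNIV"
proof (intro set_eqI iffI)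
  fix f assume "f \<in> MI b c act x0 UNIV"
  then obtain l a where "f \<in> pos_harmonic l" "equivariant act a f" by (auto simp: MI_eq)
  moreover from this have "l \<le> lambda0 b c act x0" by (rule le_lambda0)
  ultimately show "f \<in> MI b c act x0 {..lambda0 b c act x0}" by (auto simp: MI_eq)
qed (auto simp: MI_def)

lemma inj_on_rho: "inj_on (rho act) (MI b c act x0 UNIV)"
proof (rule inj_onI)
  fix f g assume "f \<in> MI b c act x0 UNIV" "g \<in> MI b c act x0 UNIV" and eq: "rho act f = rho act g"
  then obtain l a m a' where f: "f \<in> pos_harmonic l" "equivariant act a f"
    and g: "g \<in> pos_harmonic m" "equivariant act a' g"
    by (auto simp: MI_eq)
  have "a = a'" using eq rho_pos_harmonic[OF f] rho_pos_harmonic[OF g] by simp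
  then show "f = g" using equivariant_harmonic_unique f g by blast
qed

lemma rho_onto: "rho act ` MI b c act x0 UNIV = UNIV"
proof -
  have "a \<in> rho act ` MI b c act x0 UNIV" for a
  proof -
    obtain f l where "f \<in> pos_harmonic l" "equivariant act a f"
      using exists_equivariant_harmonic by blast
    then show ?thesis using rho_pos_harmonic by (force simp: MI_eq)
  qed
  then show ?thesis by blast
qed

lemma compact_MI_preimage_cball: "compact (MI b c act x0 UNIV \<inter> rho act -` cball 0 R)"
proof -
  obtain L where L: "\<And>f l a. f \<in> pos_harmonic l \<Longrightarrow> equivariant act a f \<Longrightarrow> norm a \<le> R \<Longrightarrow> L \<le> l"
    using eigenvalue_lower_bound[of R] by blast
  define K where "K = MI b c act x0 {L..lambda0 b c act x0}"
  have "MI b c act x0 UNIV \<inter> rho act -` cball 0 R = K \<inter> rho act -` cball 0 R"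
  proof (intro set_eqI iffI)
    fix f assume f: "f \<in> MI b c act x0 UNIV \<inter> rho act -` cball 0 R"
    then obtain l a where "f \<in> pos_harmonic l" "equivariant act a f" by (auto simp: MI_eq)
    moreover from this have "L \<le> l" "l \<le> lambda0 b c act x0"
      using f L rho_pos_harmonic le_lambda0 by auto
    ultimately show "f \<in> K \<inter> rho act -` cball 0 R" using f by (auto simp: K_def MI_eq)
  qed (auto simp: K_def MI_def)
  moreover have "closed (K \<inter> rho act -` cball 0 R)"
    unfolding K_def
    by (intro continuous_closed_preimage continuous_on_rho compact_imp_closed[OF compact_MI_interval]
        closed_cball)
  then have "compact (K \<inter> (K \<inter> rho act -` cball 0 R))"
    unfolding K_def by (intro compact_Int_closed compact_MI_interval)
  ultimately show ?thesis by simp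
qed

end

theorem lemma14:
  fixes b :: "'x::countable \<Rightarrow> 'x \<Rightarrow> real" and c :: "'x \<Rightarrow> real"
    and act :: "int^'d \<Rightarrow> 'x \<Rightarrow> 'x" and x0 :: 'x
  assumes b_nonneg: "\<And>x y. 0 \<le> b x y"
    and b_summable: "\<And>x. (\<lambda>y. b x y) summable_on UNIV"
    and loc_finite: "\<And>x. finite {y. 0 < b x y \<or> 0 < b y x}"
    and connected: "\<And>x y. (x, y) \<in> {(u, v). 0 < b u v}\<^sup>*"
    and act_zero: "\<And>x. act 0 x = x"
    and act_add: "\<And>z w x. act (z + w) x = act z (act w x)"
    and act_free: "\<And>z x. act z x = x \<Longrightarrow> z = 0"
    and cocompact: "\<exists>F. finite F \<and> (\<forall>x. \<exists>z. \<exists>y\<in>F. x = act z y)"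
    and invariant: "Hinvariant b c act"
  shows "(\<exists>g. homeomorphism (MI b c act x0 {..lambda0 b c act x0}) UNIV (rho act) g)
     \<and> (\<forall>l. compact (MI b c act x0 {l..lambda0 b c act x0})
            \<and> compact (rho act ` MI b c act x0 {l..lambda0 b c act x0}))"
proof -
  interpret periodic_graph b c act x0
    by unfold_locales (fact b_nonneg loc_finite connected act_zero act_add act_free cocompact invariant)+
  have "homeomorphism (MI b c act x0 UNIV) UNIV (rho act) (inv_into (MI b c act x0 UNIV) (rho act))"
    by (intro homeomorphism_if_compact_preimage_cball continuous_on_rho inj_on_rho rho_onto
        compact_MI_preimage_cball)
  moreover have "compact (rho act ` MI b c act x0 {l..lambda0 b c act x0})" for l
    by (intro compact_continuous_image continuous_on_rho compact_MI_interval)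
  ultimately show ?thesis
    using compact_MI_interval MI_upto_lambda0 by auto
qed

end
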